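(* Let $\Lambda\subseteq\Sigma_A$ and $\Gamma\subseteq\Sigma_B$ be shift spaces. Suppose that $\Phi:\Lambda\to\Gamma$ is a map such that $\Phi(\mathcal O)=\mathcal O$ and such that $C_{\varepsilon}:=\Phi^{-1}(\mathcal O)$ is a finitely defined set in $\Lambda$. Then $\Phi$ is continuous and commutes with the shift map (i.e. $\Phi\circ\sigma=\sigma\circ\Phi$) if, and only if, $\Phi$ is a sliding block code given by $\bigl(\Phi(x)\bigr)_n=\sum_{a\in L_\Gamma\cup\{\varepsilon\}}a\mathbf{1}_{C_a}\circ\sigma^{n-1}(x)$ such that, for all $a\in L_\Gamma$, the set $C_a$ is a finite (possibly empty) union of generalized cylinders of $\Lambda$.
   Context: Alphabets and sequences: $A$ (and similarly $B$) is a countable discrete alphabet, finite or infinite. Let $\varepsilon$ be a new symbol (the empty letter), $\tilde A=A\cup\{\varepsilon\}$. Put $\Sigma_A^{\mathrm{inf}}=A^{\mathbb N}$ and let $\Sigma_A^{\mathrm{fin}}$ be the set of sequences $(x_i)_{i\in\mathbb N}$ in $\tilde A$ containing at least one $\varepsilon$ such that $x_i=\varepsilon$ implies $x_{i+1}=\varepsilon$. The Ott–Tomforde–Willis full shift is $\Sigma_A=\Sigma_A^{\mathrm{inf}}$ if $A$ is finite and $\Sigma_A=\Sigma_A^{\mathrm{inf}}\cup\Sigma_A^{\mathrm{fin}}$ if $A$ is infinite. The length of $x$ is $l(x)=\min\{k-1: x_k=\varepsilon\}$ ($=\infty$ for $x\in A^{\mathbb N}$); a finite sequence of length $k$ is identified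 with the word $x_1\dots x_k$; the constant sequence $\mathcal O=(\varepsilon\varepsilon\varepsilon\dots)$ is the empty sequence (length $0$). For $x\in\Sigma_A^{\mathrm{fin}}$ and finite $F\subset A$, the generalized cylinder is $Z(x,F)=\{y\in\Sigma_A: y_i=x_i \text{ for } 1\le i\le l(x),\ y_{l(x)+1}\notin F\}$, and $Z(x):=Z(x,\emptyset)$. $\Sigma_A$ carries the topology generated by the generalized cylinders (it is compact, metrizable). The shift map is $\sigma((x_i)_{i})=(x_{i+1})_i$ (so $\sigma(\mathcal O)=\mathcal O$). For $\Lambda\subseteq\Sigma_A$: $\Lambda^{\mathrm{fin}}=\Lambda\cap\Sigma_A^{\mathrm{fin}}$, $\Lambda^{\mathrm{inf}}=\Lambda\cap\Sigma_A^{\mathrm{inf}}$; $B_n(\Lambda)\subseteq\tilde A^n$ is the set of words of length $n$ occurring as consecutive subblocks of elements of $\Lambda$, $B(\Lambda)=\bigcup_{n\ge1}B_n(\Lambda)$, and $L_\Lambda=B_1(\Lambda)\setminus\{\varepsilon\}$. For a word $a\in B_n(\Lambda)$, its follower set is $\mathcal F(\Lambda,a)=\{b\in B_1(\Lambda): ab\in B_{n+1}(\Lambda)\}$. A shift space is $\Lambda\subseteq\Sigma_A$ that is closed, satisfies $\sigma(\Lambda)\subseteq\Lambda$, and has the infinite extension property: $\mathcal O\in\Lambda$ iff $L_\Lambda$ is infinite, and a finite sequence $x\neq\mathcal O$ lies in $\Lambda$ iff $|\mathcal F(\Lambda,x)|=\infty$. Generalized cylinders of $\Lambda$ are the sets $Z(x,F)\cap\Lambda$.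 Finitely defined sets: $C\subseteq\Lambda$ is finitely defined in $\Lambda$ if there exist $I,J\subseteq\mathbb N$, integers $\ell_i,n_j\ge0$ and words $b_i,d_j\in B(\Sigma_A)$ ($i\in I$, $j\in J$) with $C=\{x\in\Lambda: (x_1\dots x_{1+\ell_i})=b_i\text{ for some } i\in I\}$ and $\Lambda\setminus C=\{x\in\Lambda: (x_1\dots x_{1+n_j})=d_j \text{ for some } j\in J\}$; its anticipation is $\sup_i\ell_i$. Sliding block codes: given a partition $\{C_a\}_{a\in B\cup\{\varepsilon\}}$ of a shift space $\Lambda\subseteq\Sigma_A$ such that each $C_a$ is finitely defined in $\Lambda$ and $\sigma(C_\varepsilon)\subseteq C_\varepsilon$, the map $\Phi:\Lambda\to\Sigma_B$ with $(\Phi(x))_n=\sum_{a}a\mathbf 1_{C_a}(\sigma^{n-1}(x))$ (i.e. $(\Phi(x))_n$ is the unique $a$ with $\sigma^{n-1}(x)\in C_a$) is called a sliding block code. Here $\mathcal O$ in $\Phi(\mathcal O)=\mathcal O$ and $\Phi^{-1}(\mathcal O)$ denotes the respective empty sequences of $\Sigma_A$ and $\Sigma_B$. *)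

theory Defs
  imports "HOL-Analysis.Analysis"
begin

text \<open>Sequences x = (x_1 x_2 ...) over the extended alphabet A \<union> {\<epsilon>} are modelled as
  functions nat \<Rightarrow> 'a option, with None playing the role of the empty letter \<epsilon> and
  index i (0-based) corresponding to x_{i+1}.\<close>

type_synonym 'a seq = "nat \<Rightarrow> 'a option"

definition Sinf :: "'a set \<Rightarrow> 'a seq set" where
  "Sinf A = {x. \<forall>i. \<exists>a\<in>A. x i = Some a}"

definition Sfin :: "'a set \<Rightarrow> 'a seq set" where
  "Sfin A = {x. (\<forall>i. x i = None \<or> (\<exists>a\<in>A. x i = Some a)) \<and> (\<exists>i. x i = None)
                \<and> (\<forall>i. x i = None \<longrightarrow> x (Suc i) = None)}"

definition OTW :: "'a set \<Rightarrow> 'a seq set" where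
  "OTW A = (if finite A then Sinf A else Sinf A \<union> Sfin A)"

definition emp :: "'a seq" where
  "emp = (\<lambda>_. None)"

text \<open>Length l(x) (meaningful for finite sequences) and the associated word.\<close>
definition len :: "'a seq \<Rightarrow> nat" where
  "len x = (LEAST k. x k = None)"

definition word :: "'a seq \<Rightarrow> 'a option list" where
  "word x = map x [0..<len x]"

definition shift :: "'a seq \<Rightarrow> 'a seq" where
  "shift x = (\<lambda>i. x (Suc i))"

definition gcyl :: "'a set \<Rightarrow> 'a seq \<Rightarrow> 'a set \<Rightarrow> 'a seq set" where
  "gcyl A x F = {y \<in> OTW A. (\<forall>i<len x. y i = x i) \<and> y (len x) \<notin> Some ` F}"

definition gcyls :: "'a set \<Rightarrow> 'a seq set set" where
  "gcyls A = {gcyl A x F | x F. x \<in> Sfin A \<and> finite F \<and> F \<subseteq> A}"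

definition OTW_top :: "'a set \<Rightarrow> 'a seq topology" where
  "OTW_top A = subtopology (topology_generated_by (gcyls A)) (OTW A)"

definition blocks :: "'a seq set \<Rightarrow> nat \<Rightarrow> 'a option list set" where
  "blocks \<Lambda> n = {w. length w = n \<and> (\<exists>x\<in>\<Lambda>. \<exists>k. w = map x [k..<k+n])}"

definition allblocks :: "'a seq set \<Rightarrow> 'a option list set" where
  "allblocks \<Lambda> = (\<Union>n\<in>{1..}. blocks \<Lambda> n)"

definition letters :: "'a seq set \<Rightarrow> 'a set" where
  "letters \<Lambda> = {a. [Some a] \<in> blocks \<Lambda> 1}"

definition follower :: "'a seq set \<Rightarrow> 'a option list \<Rightarrow> 'a option set" where
  "follower \<Lambda> w = {b. [b] \<in> blocks \<Lambda> 1 \<and> w @ [b] \<in> blocks \<Lambda> (Suc (length w))}"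

definition shift_space :: "'a set \<Rightarrow> 'a seq set \<Rightarrow> bool" where
  "shift_space A \<Lambda> \<longleftrightarrow>
     \<Lambda> \<subseteq> OTW A \<and> closedin (OTW_top A) \<Lambda> \<and> shift ` \<Lambda> \<subseteq> \<Lambda> \<and>
     (emp \<in> \<Lambda> \<longleftrightarrow> infinite (letters \<Lambda>)) \<and>
     (\<forall>x\<in>Sfin A. x \<noteq> emp \<longrightarrow> (x \<in> \<Lambda> \<longleftrightarrow> infinite (follower \<Lambda> (word x))))"

text \<open>Finitely defined sets (the word x_1 ... x_{1+l} is map x [0..<Suc l]).\<close>
definition finitely_defined :: "'a set \<Rightarrow> 'a seq set \<Rightarrow> 'a seq set \<Rightarrow> bool" where
  "finitely_defined A \<Lambda> C \<longleftrightarrow> C \<subseteq> \<Lambda> \<and>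
     (\<exists>(I::nat set) (J::nat set) (l::nat \<Rightarrow> nat) (n::nat \<Rightarrow> nat)
        (b::nat \<Rightarrow> 'a option list) (d::nat \<Rightarrow> 'a option list).
        (\<forall>i\<in>I. b i \<in> allblocks (OTW A)) \<and> (\<forall>j\<in>J. d j \<in> allblocks (OTW A)) \<and>
        C = {x\<in>\<Lambda>. \<exists>i\<in>I. map x [0..<Suc (l i)] = b i} \<and>
        \<Lambda> - C = {x\<in>\<Lambda>. \<exists>j\<in>J. map x [0..<Suc (n j)] = d j})"

definition sliding_block_code ::
  "'a set \<Rightarrow> 'a seq set \<Rightarrow> 'b set \<Rightarrow> ('b option \<Rightarrow> 'a seq set) \<Rightarrow> ('a seq \<Rightarrow> 'b seq) \<Rightarrow> bool" where
  "sliding_block_code A \<Lambda> K C \<Phi> \<longleftrightarrow>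
     (\<forall>a\<in>insert None (Some ` K). finitely_defined A \<Lambda> (C a)) \<and>
     (\<forall>a\<in>insert None (Some ` K). \<forall>b\<in>insert None (Some ` K). a \<noteq> b \<longrightarrow> C a \<inter> C b = {}) \<and>
     (\<Union>a\<in>insert None (Some ` K). C a) = \<Lambda> \<and>
     shift ` C None \<subseteq> C None \<and>
     (\<forall>x\<in>\<Lambda>. \<forall>n. \<Phi> x n = (THE a. a \<in> insert None (Some ` K) \<and> (shift ^^ n) x \<in> C a))"

end

theory Submission
  imports Defs
begin

text \<open>Generalized cylinders are open and closed, and the full shift is compact by Koenig's
  argument; hence a subset of a shift space \<open>\<Lambda>\<close> that is open and closed in \<open>\<Lambda>\<close> is a finite union
  of cylinders, and, the alphabet being countable, an open subset of \<open>\<Lambda>\<close> is described by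
  countably many prefixes.  If \<open>\<Phi>\<close> is continuous and commutes with the shift, then
  \<open>\<Phi>(x)\<^sub>n = \<Phi>(\<sigma>\<^sup>n x)\<^sub>1\<close>, so \<open>\<Phi>\<close> is the sliding block code of the sets \<open>C\<^sub>a = {x. \<Phi>(x)\<^sub>1 = a}\<close>,
  which for \<open>a \<noteq> \<epsilon>\<close> are preimages of clopen cylinders.  Conversely, for a sliding block code the
  \<open>n\<close>-th letter of \<open>\<Phi>(x)\<close> is decided by the membership of \<open>\<sigma>\<^sup>n x\<close> in finitely many cylinders,
  which is constant near \<open>x\<close> as long as \<open>x\<close> does not end before position \<open>n\<close>; and \<open>x\<close> cannot end
  before a letter of \<open>\<Phi>(x)\<close>, since \<open>\<sigma>\<^sup>n x = \<O>\<close> forces \<open>\<Phi>(x)\<^sub>n = \<epsilon>\<close>.\<close>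

section \<open>Sequences and cylinders\<close>

lemma OTW_letter: "x \<in> OTW A \<Longrightarrow> x i = None \<or> (\<exists>a\<in>A. x i = Some a)"
  by (auto simp: OTW_def Sinf_def Sfin_def split: if_splits)

lemma Sfin_None_mono:
  assumes "x \<in> Sfin A" "x i = None" "i \<le> j"
  shows "x j = None"
  using assms(3,2)
proof (induction j rule: dec_induct)
  case (step n)
  then show ?case using assms(1) by (auto simp: Sfin_def)
qed

lemma OTW_None_mono:
  assumes "x \<in> OTW A" "x i = None" "i \<le> j"
  shows "x j = None"
proof -
  have "x \<notin> Sinf A" using assms(2) unfolding Sinf_def by (auto intro!: exI[of _ i])
  then have "x \<in> Sfin A" using assms(1) by (auto simp: OTW_def split: if_splits)
  then show ?thesis using Sfin_None_mono assms(2,3) by blast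
qed

lemma OTW_eq_emp_iff: "x \<in> OTW A \<Longrightarrow> x = emp \<longleftrightarrow> x 0 = None"
  using OTW_None_mono[of x A 0] by (auto simp: emp_def)

lemma funpow_shift: "(shift ^^ n) x = (\<lambda>i. x (i + n))"
  by (induction n) (auto simp: shift_def)

lemma funpow_shift_emp: "x \<in> OTW A \<Longrightarrow> x n = None \<Longrightarrow> (shift ^^ n) x = emp"
  using OTW_None_mono[of x A n] by (auto simp: funpow_shift emp_def)

lemma shift_OTW: "x \<in> OTW A \<Longrightarrow> shift x \<in> OTW A"
  by (auto simp: OTW_def Sinf_def Sfin_def shift_def split: if_splits)

lemma funpow_shift_OTW: "x \<in> OTW A \<Longrightarrow> (shift ^^ n) x \<in> OTW A"
  by (induction n) (auto simp: shift_OTW)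

lemma funpow_shift_closed: "shift ` \<Lambda> \<subseteq> \<Lambda> \<Longrightarrow> x \<in> \<Lambda> \<Longrightarrow> (shift ^^ n) x \<in> \<Lambda>"
  by (induction n) auto

definition cyl :: "'a set \<Rightarrow> 'a list \<Rightarrow> 'a set \<Rightarrow> 'a seq set" where
  "cyl A w F = {y \<in> OTW A. (\<forall>i<length w. y i = Some (w ! i)) \<and> y (length w) \<notin> Some ` F}"

definition fin_seq :: "'a list \<Rightarrow> 'a seq" where
  "fin_seq w = (\<lambda>i. if i < length w then Some (w ! i) else None)"

lemma fin_seq_Sfin: "set w \<subseteq> A \<Longrightarrow> fin_seq w \<in> Sfin A"
  by (auto simp: Sfin_def fin_seq_def)

lemma len_fin_seq: "len (fin_seq w) = length w"
  unfolding len_def by (rule Least_equality) (auto simp: fin_seq_def split: if_splits)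

lemma Sfin_obtain_fin_seq:
  assumes "x \<in> Sfin A"
  obtains w where "set w \<subseteq> A" "x = fin_seq w"
proof
  define w where "w = map (\<lambda>i. the (x i)) [0..<len x]"
  obtain k where "x k = None" using assms by (auto simp: Sfin_def)
  then have at_len: "x (len x) = None" unfolding len_def by (rule LeastI)
  have letter: "x i \<in> Some ` A" if "i < len x" for i
  proof -
    have "x i \<noteq> None" using not_less_Least[OF that[unfolded len_def]] .
    moreover have "x i = None \<or> (\<exists>a\<in>A. x i = Some a)" using assms by (auto simp: Sfin_def)
    ultimately show ?thesis by auto
  qed
  then show "set w \<subseteq> A" by (force simp: w_def)
  show "x = fin_seq w"
  proof
    fix i show "x i = fin_seq w i"
      using letter[of i] Sfin_None_mono[OF assms at_len, of i] by (auto simp: fin_seq_def w_def)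
  qed
qed

lemma gcyl_fin_seq: "gcyl A (fin_seq w) F = cyl A w F"
  unfolding gcyl_def cyl_def len_fin_seq by (auto simp: fin_seq_def)

lemma gcyls_eq: "gcyls A = {cyl A w F | w F. set w \<subseteq> A \<and> finite F \<and> F \<subseteq> A}"
proof (intro equalityI subsetI)
  fix G assume "G \<in> gcyls A"
  then obtain x F where G: "G = gcyl A x F" "x \<in> Sfin A" "finite F" "F \<subseteq> A"
    unfolding gcyls_def by blast
  from G(2) obtain w where "set w \<subseteq> A" "x = fin_seq w" by (rule Sfin_obtain_fin_seq)
  with G show "G \<in> {cyl A w F | w F. set w \<subseteq> A \<and> finite F \<and> F \<subseteq> A}"
    by (auto simp: gcyl_fin_seq)
next
  fix G assume "G \<in> {cyl A w F | w F. set w \<subseteq> A \<and> finite F \<and> F \<subseteq> A}"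
  then show "G \<in> gcyls A"
    unfolding gcyls_def by (auto simp flip: gcyl_fin_seq intro: fin_seq_Sfin)
qed

lemma cyl_in_gcyls: "set w \<subseteq> A \<Longrightarrow> finite F \<Longrightarrow> F \<subseteq> A \<Longrightarrow> cyl A w F \<in> gcyls A"
  unfolding gcyls_eq by blast

lemma gcyls_obtain_cyl:
  assumes "G \<in> gcyls A"
  obtains w F where "G = cyl A w F" "set w \<subseteq> A" "finite F" "F \<subseteq> A"
  using assms unfolding gcyls_eq by blast

lemma cyl_subset_OTW: "cyl A w F \<subseteq> OTW A"
  by (auto simp: cyl_def)

lemma cyl_Nil: "cyl A [] {} = OTW A"
  by (auto simp: cyl_def)

lemma Union_gcyls: "\<Union>(gcyls A) = OTW A"
  using cyl_subset_OTW cyl_in_gcyls[of "[]" A "{}"] by (auto simp: gcyls_eq cyl_Nil)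

lemma topspace_OTW_top: "topspace (OTW_top A) = OTW A"
  by (simp add: OTW_top_def Union_gcyls)

lemma cyl_agree_iff:
  assumes "x \<in> OTW A" "y \<in> OTW A" "\<forall>i\<le>length w. y i = x i"
  shows "y \<in> cyl A w F \<longleftrightarrow> x \<in> cyl A w F"
  using assms by (auto simp: cyl_def)

lemma cyl_subset_cyl:
  assumes "x \<in> cyl A v F" "x \<in> cyl A u E" "length v < length u"
  shows "cyl A u E \<subseteq> cyl A v F"
  using assms by (auto simp: cyl_def)

lemma cyl_same_length:
  assumes "x \<in> cyl A v F" "x \<in> cyl A u E" "length v = length u"
  shows "u = v"
  using assms by (auto simp: cyl_def intro: nth_equalityI)

lemma cyl_Int_same: "cyl A v F \<inter> cyl A v E = cyl A v (F \<union> E)"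
  by (auto simp: cyl_def)

section \<open>Cylinder neighbourhoods\<close>

definition cyl_eventually :: "'a set \<Rightarrow> 'a seq \<Rightarrow> ('a seq \<Rightarrow> bool) \<Rightarrow> bool" where
  "cyl_eventually A x P \<longleftrightarrow> (\<exists>U\<in>gcyls A. x \<in> U \<and> (\<forall>y\<in>U. P y))"

lemma cyl_eventually_cyl:
  "set w \<subseteq> A \<Longrightarrow> finite G \<Longrightarrow> G \<subseteq> A \<Longrightarrow> x \<in> cyl A w G \<Longrightarrow> cyl_eventually A x (\<lambda>y. y \<in> cyl A w G)"
  unfolding cyl_eventually_def using cyl_in_gcyls by blast

lemma cyl_eventually_mono:
  assumes "cyl_eventually A x P" "\<And>y. y \<in> OTW A \<Longrightarrow> P y \<Longrightarrow> Q y"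
  shows "cyl_eventually A x Q"
  using assms Union_gcyls unfolding cyl_eventually_def by blast

lemma cyl_eventually_True: "x \<in> OTW A \<Longrightarrow> cyl_eventually A x (\<lambda>y. True)"
  unfolding cyl_eventually_def using cyl_in_gcyls[of "[]" A "{}"] by (auto simp: cyl_Nil)

text \<open>Two cylinders through a common point are nested, or have the same word, in which case
  their intersection is again a cylinder.\<close>

lemma cyl_eventually_conj:
  assumes "cyl_eventually A x P" "cyl_eventually A x Q"
  shows "cyl_eventually A x (\<lambda>y. P y \<and> Q y)"
proof -
  have *: "cyl_eventually A x (\<lambda>y. P y \<and> Q y)"
    if "set v \<subseteq> A" "finite F" "F \<subseteq> A" "x \<in> cyl A v F" "\<forall>y\<in>cyl A v F. P y"
       "set u \<subseteq> A" "finite E" "E \<subseteq> A" "x \<in> cyl A u E" "\<forall>y\<in>cyl A u E. Q y"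
       "length v \<le> length u" for P Q v F u E
  proof (cases "length v < length u")
    case True
    then have "cyl A u E \<subseteq> cyl A v F" using cyl_subset_cyl that(4,9) by blast
    then have "\<forall>y\<in>cyl A u E. P y \<and> Q y" using that(5,10) by blast
    then show ?thesis
      unfolding cyl_eventually_def using cyl_in_gcyls[OF that(6-8)] that(9) by blast
  next
    case False
    then have "u = v" using cyl_same_length that(4,9,11) by simp
    then have "x \<in> cyl A v (F \<union> E)" "\<forall>y\<in>cyl A v (F \<union> E). P y \<and> Q y"
      using that(4,5,9,10) by (simp_all flip: cyl_Int_same)
    moreover have "cyl A v (F \<union> E) \<in> gcyls A" using that(1-3,7,8) by (simp add: cyl_in_gcyls)
    ultimately show ?thesis unfolding cyl_eventually_def by blast
  qed
  from assms obtain v F u E where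
    vF: "set v \<subseteq> A" "finite F" "F \<subseteq> A" "x \<in> cyl A v F" "\<forall>y\<in>cyl A v F. P y" and
    uE: "set u \<subseteq> A" "finite E" "E \<subseteq> A" "x \<in> cyl A u E" "\<forall>y\<in>cyl A u E. Q y"
    unfolding cyl_eventually_def gcyls_eq by blast
  show ?thesis
  proof (cases "length v \<le> length u")
    case True
    then show ?thesis by (rule *[OF vF uE])
  next
    case False
    then have "cyl_eventually A x (\<lambda>y. Q y \<and> P y)" by (intro *[OF uE vF]) simp
    then show ?thesis by (rule cyl_eventually_mono) blast
  qed
qed

lemma cyl_eventually_ball:
  assumes "finite I" "x \<in> OTW A" "\<And>i. i \<in> I \<Longrightarrow> cyl_eventually A x (P i)"
  shows "cyl_eventually A x (\<lambda>y. \<forall>i\<in>I. P i y)"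
  using assms
proof (induction I rule: finite_induct)
  case empty
  then show ?case using cyl_eventually_True by simp
next
  case (insert i I)
  then have "cyl_eventually A x (\<lambda>y. P i y \<and> (\<forall>i\<in>I. P i y))"
    by (intro cyl_eventually_conj) auto
  then show ?case by (rule cyl_eventually_mono) simp
qed

lemma generate_topology_on_cyl_eventually:
  "generate_topology_on (gcyls A) U \<Longrightarrow> x \<in> U \<Longrightarrow> cyl_eventually A x (\<lambda>y. y \<in> U)"
proof (induction arbitrary: x rule: generate_topology_on.induct)
  case (Int U V)
  then show ?case using cyl_eventually_conj[of A x "\<lambda>y. y \<in> U" "\<lambda>y. y \<in> V"] by simp
next
  case (UN \<U>)
  then obtain U where "U \<in> \<U>" "x \<in> U" by blast
  with UN.IH have "cyl_eventually A x (\<lambda>y. y \<in> U)" by blast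
  then show ?case by (rule cyl_eventually_mono) (use \<open>U \<in> \<U>\<close> in blast)
qed (auto simp: cyl_eventually_def)

lemma openin_OTW_top_cyl_eventually:
  assumes "openin (OTW_top A) U" "x \<in> U"
  shows "cyl_eventually A x (\<lambda>y. y \<in> U)"
proof -
  obtain T where T: "generate_topology_on (gcyls A) T" "U = T \<inter> OTW A"
    using assms(1)
    unfolding OTW_top_def openin_subtopology openin_topology_generated_by_iff by blast
  then have "cyl_eventually A x (\<lambda>y. y \<in> T)"
    using generate_topology_on_cyl_eventually assms(2) by blast
  then show ?thesis by (rule cyl_eventually_mono) (simp add: T(2))
qed

lemma openin_OTW_top_gcyls: "G \<in> gcyls A \<Longrightarrow> openin (OTW_top A) G"
  unfolding OTW_top_def openin_subtopology openin_topology_generated_by_iff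
  using Union_gcyls by (blast intro: generate_topology_on.Basis)

lemma openin_subtopology_OTW_iff:
  assumes "\<Lambda> \<subseteq> OTW A"
  shows "openin (subtopology (OTW_top A) \<Lambda>) P \<longleftrightarrow>
           P \<subseteq> \<Lambda> \<and> (\<forall>x\<in>P. cyl_eventually A x (\<lambda>y. y \<in> \<Lambda> \<longrightarrow> y \<in> P))"
proof
  assume "openin (subtopology (OTW_top A) \<Lambda>) P"
  then obtain T where T: "openin (OTW_top A) T" "P = T \<inter> \<Lambda>"
    unfolding openin_subtopology by blast
  have "cyl_eventually A x (\<lambda>y. y \<in> \<Lambda> \<longrightarrow> y \<in> P)" if "x \<in> P" for x
  proof -
    have "cyl_eventually A x (\<lambda>y. y \<in> T)"
      using T that by (blast intro: openin_OTW_top_cyl_eventually)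
    then show ?thesis by (rule cyl_eventually_mono) (simp add: T(2))
  qed
  with T(2) show "P \<subseteq> \<Lambda> \<and> (\<forall>x\<in>P. cyl_eventually A x (\<lambda>y. y \<in> \<Lambda> \<longrightarrow> y \<in> P))" by blast
next
  assume P: "P \<subseteq> \<Lambda> \<and> (\<forall>x\<in>P. cyl_eventually A x (\<lambda>y. y \<in> \<Lambda> \<longrightarrow> y \<in> P))"
  define \<U> where "\<U> = {G \<in> gcyls A. G \<inter> \<Lambda> \<subseteq> P}"
  have "openin (OTW_top A) (\<Union>\<U>)"
    by (rule openin_Union) (simp add: \<U>_def openin_OTW_top_gcyls)
  moreover have "P = \<Union>\<U> \<inter> \<Lambda>"
  proof
    show "P \<subseteq> \<Union>\<U> \<inter> \<Lambda>"
    proof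
      fix x assume "x \<in> P"
      with P obtain G where "G \<in> gcyls A" "x \<in> G" "\<forall>y\<in>G. y \<in> \<Lambda> \<longrightarrow> y \<in> P"
        unfolding cyl_eventually_def by blast
      with \<open>x \<in> P\<close> P show "x \<in> \<Union>\<U> \<inter> \<Lambda>" unfolding \<U>_def by blast
    qed
  qed (auto simp: \<U>_def)
  ultimately show "openin (subtopology (OTW_top A) \<Lambda>) P"
    unfolding openin_subtopology by blast
qed

lemma closedin_OTW_top_cyl_eventually:
  assumes "closedin (OTW_top A) \<Lambda>" "x \<in> OTW A" "x \<notin> \<Lambda>"
  shows "cyl_eventually A x (\<lambda>y. y \<notin> \<Lambda>)"
proof -
  have "openin (OTW_top A) (OTW A - \<Lambda>)"
    using assms(1) by (simp add: closedin_def topspace_OTW_top)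
  with assms(2,3) have "cyl_eventually A x (\<lambda>y. y \<in> OTW A - \<Lambda>)"
    by (blast intro: openin_OTW_top_cyl_eventually)
  then show ?thesis by (rule cyl_eventually_mono) simp
qed

lemma OTW_obtain_prefix:
  assumes "x \<in> OTW A" "\<forall>j<n. x j \<noteq> None"
  obtains u where "length u = n" "set u \<subseteq> A" "x \<in> cyl A u {}"
proof
  define u where "u = map (\<lambda>j. the (x j)) [0..<n]"
  show "length u = n" by (simp add: u_def)
  show "set u \<subseteq> A"
  proof
    fix a assume "a \<in> set u"
    then obtain j where "j < n" "a = the (x j)" by (auto simp: u_def)
    with assms OTW_letter[OF assms(1), of j] show "a \<in> A" by auto
  qed
  show "x \<in> cyl A u {}" using assms by (auto simp: u_def cyl_def)
qed

lemma cyl_eventually_agree: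
  assumes "x \<in> OTW A" "\<forall>j<n. x j \<noteq> None"
  shows "cyl_eventually A x (\<lambda>y. \<forall>j<n. y j = x j)"
proof -
  obtain u where u: "length u = n" "set u \<subseteq> A" "x \<in> cyl A u {}"
    using OTW_obtain_prefix[OF assms] .
  then have "cyl_eventually A x (\<lambda>y. y \<in> cyl A u {})" by (intro cyl_eventually_cyl) auto
  then show ?thesis by (rule cyl_eventually_mono) (use u in \<open>auto simp: cyl_def\<close>)
qed

text \<open>The only delicate case is a point that leaves the word \<open>w\<close>
  with the empty letter: it is separated from \<open>cyl A w F\<close> by excluding the single letter
  \<open>w ! i\<close> at that position, not by fixing the empty letter, which is not isolated.\<close>

lemma cyl_eventually_notin_cyl:
  assumes x: "x \<in> OTW A" "x \<notin> cyl A w F" and w: "set w \<subseteq> A"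
  shows "cyl_eventually A x (\<lambda>y. y \<notin> cyl A w F)"
proof -
  obtain i where i: "i \<le> length w" "\<forall>j<i. x j = Some (w ! j)"
    "i < length w \<Longrightarrow> x i \<noteq> Some (w ! i)" "i = length w \<Longrightarrow> x i \<in> Some ` F"
  proof (cases "\<exists>i<length w. x i \<noteq> Some (w ! i)")
    case True
    define i where "i = (LEAST i. i < length w \<and> x i \<noteq> Some (w ! i))"
    from True have "i < length w \<and> x i \<noteq> Some (w ! i)"
      unfolding i_def by (rule LeastI_ex)
    moreover have "x j = Some (w ! j)" if "j < i" for j
      using not_less_Least[OF that[unfolded i_def]] that calculation by auto
    ultimately show ?thesis by (intro that[of i]) auto
  next
    case False
    with x show ?thesis by (intro that[of "length w"]) (auto simp: cyl_def)
  qed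
  show ?thesis
  proof (cases "x i")
    case None
    then have "i < length w" using i(1,4) by (cases "i = length w") auto
    with i(2) None have "x \<in> cyl A (take i w) {w ! i}" using x(1) by (auto simp: cyl_def)
    moreover have "set (take i w) \<subseteq> A" "{w ! i} \<subseteq> A"
      using w \<open>i < length w\<close> by (auto dest: in_set_takeD)
    ultimately have "cyl_eventually A x (\<lambda>y. y \<in> cyl A (take i w) {w ! i})"
      by (intro cyl_eventually_cyl) auto
    then show ?thesis
      by (rule cyl_eventually_mono) (use \<open>i < length w\<close> in \<open>auto simp: cyl_def\<close>)
  next
    case (Some c)
    with i(2) have "\<forall>j<Suc i. x j \<noteq> None" by (auto simp: less_Suc_eq)
    then have "cyl_eventually A x (\<lambda>y. \<forall>j<Suc i. y j = x j)" by (rule cyl_eventually_agree[OF x(1)])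
    then show ?thesis
    proof (rule cyl_eventually_mono)
      fix y assume "\<forall>j<Suc i. y j = x j"
      then have "y i = x i" by simp
      with i(1,3,4) show "y \<notin> cyl A w F" by (cases "i = length w") (auto simp: cyl_def)
    qed
  qed
qed

lemma cyl_eventually_cyl_iff:
  assumes "x \<in> OTW A" "set w \<subseteq> A" "finite F" "F \<subseteq> A"
  shows "cyl_eventually A x (\<lambda>y. y \<in> cyl A w F \<longleftrightarrow> x \<in> cyl A w F)"
proof (cases "x \<in> cyl A w F")
  case True
  with assms have "cyl_eventually A x (\<lambda>y. y \<in> cyl A w F)" by (intro cyl_eventually_cyl)
  with True show ?thesis by (auto elim: cyl_eventually_mono)
next
  case False
  with assms have "cyl_eventually A x (\<lambda>y. y \<notin> cyl A w F)" by (intro cyl_eventually_notin_cyl)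
  with False show ?thesis by (auto elim: cyl_eventually_mono)
qed

lemma funpow_shift_in_cyl_iff:
  assumes "y \<in> cyl A u {}"
  shows "(shift ^^ length u) y \<in> cyl A v F \<longleftrightarrow> y \<in> cyl A (u @ v) F"
proof -
  have pre: "\<forall>i<length u. y i = Some (u ! i)" and y: "y \<in> OTW A"
    using assms by (auto simp: cyl_def)
  have "(\<forall>i<length (u @ v). y i = Some ((u @ v) ! i)) \<longleftrightarrow>
        (\<forall>i<length v. y (i + length u) = Some (v ! i))"
  proof
    assume "\<forall>i<length (u @ v). y i = Some ((u @ v) ! i)"
    then show "\<forall>i<length v. y (i + length u) = Some (v ! i)"
      by (auto simp: nth_append dest: spec[of _ "_ + length u"])
  next
    assume suffix: "\<forall>i<length v. y (i + length u) = Some (v ! i)"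
    show "\<forall>i<length (u @ v). y i = Some ((u @ v) ! i)"
    proof (intro allI impI)
      fix i assume "i < length (u @ v)"
      with pre suffix[rule_format, of "i - length u"] show "y i = Some ((u @ v) ! i)"
        by (cases "i < length u") (auto simp: nth_append)
    qed
  qed
  moreover have "(shift ^^ length u) y \<in> OTW A" using y by (rule funpow_shift_OTW)
  ultimately show ?thesis using y by (simp add: cyl_def funpow_shift add.commute)
qed

lemma cyl_eventually_funpow_shift_cyl_iff:
  assumes x: "x \<in> OTW A" "\<forall>j<k. x j \<noteq> None" and vF: "set v \<subseteq> A" "finite F" "F \<subseteq> A"
  shows "cyl_eventually A x (\<lambda>y. (shift ^^ k) y \<in> cyl A v F \<longleftrightarrow> (shift ^^ k) x \<in> cyl A v F)"
proof -
  obtain u where u: "length u = k" "set u \<subseteq> A" "x \<in> cyl A u {}"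
    using OTW_obtain_prefix[OF x] .
  have "cyl_eventually A x (\<lambda>y. y \<in> cyl A u {})"
    using u by (intro cyl_eventually_cyl) auto
  moreover have "cyl_eventually A x (\<lambda>y. y \<in> cyl A (u @ v) F \<longleftrightarrow> x \<in> cyl A (u @ v) F)"
    using u vF by (intro cyl_eventually_cyl_iff[OF x(1)]) auto
  ultimately have "cyl_eventually A x (\<lambda>y. y \<in> cyl A u {} \<and>
      (y \<in> cyl A (u @ v) F \<longleftrightarrow> x \<in> cyl A (u @ v) F))"
    by (rule cyl_eventually_conj)
  then show ?thesis
    by (rule cyl_eventually_mono) (use u funpow_shift_in_cyl_iff in metis)
qed

lemma cyl_eventually_funpow_shift_Union_iff:
  assumes "x \<in> OTW A" "\<forall>j<k. x j \<noteq> None" "finite S" "S \<subseteq> gcyls A"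
  shows "cyl_eventually A x (\<lambda>y. (shift ^^ k) y \<in> \<Union>S \<longleftrightarrow> (shift ^^ k) x \<in> \<Union>S)"
proof -
  have "cyl_eventually A x (\<lambda>y. \<forall>G\<in>S. (shift ^^ k) y \<in> G \<longleftrightarrow> (shift ^^ k) x \<in> G)"
  proof (rule cyl_eventually_ball[OF assms(3,1)])
    fix G assume "G \<in> S"
    with assms(4) obtain v F where "G = cyl A v F" "set v \<subseteq> A" "finite F" "F \<subseteq> A"
      by (blast elim: gcyls_obtain_cyl)
    then show "cyl_eventually A x (\<lambda>y. (shift ^^ k) y \<in> G \<longleftrightarrow> (shift ^^ k) x \<in> G)"
      using cyl_eventually_funpow_shift_cyl_iff[OF assms(1,2)] by simp
  qed
  then show ?thesis by (rule cyl_eventually_mono) blast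
qed

section \<open>Compactness\<close>

lemma cyl_finite_alphabet: "finite A \<Longrightarrow> cyl A w A = {}"
  by (auto simp: cyl_def OTW_def Sinf_def)

lemma fin_seq_in_cyl: "set w \<subseteq> A \<Longrightarrow> infinite A \<Longrightarrow> fin_seq w \<in> cyl A w {}"
  using fin_seq_Sfin by (fastforce simp: cyl_def fin_seq_def OTW_def)

lemma cyl_through_fin_seq:
  assumes "set w \<subseteq> A" "infinite A" "fin_seq w \<in> cyl A v F" "finite F" "F \<subseteq> A"
  obtains E where "finite E" "E \<subseteq> A" "cyl A w E \<subseteq> cyl A v F"
proof -
  have w: "fin_seq w \<in> cyl A w {}" using assms(1,2) by (rule fin_seq_in_cyl)
  have "\<not> length w < length v"
    using assms(3) by (auto simp: cyl_def fin_seq_def dest: spec[of _ "length w"])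
  then consider "length v < length w" | "length v = length w" by linarith
  then show ?thesis
  proof cases
    case 1
    then show ?thesis using that[of "{}"] cyl_subset_cyl[OF assms(3) w] by blast
  next
    case 2
    then show ?thesis using that[of F] assms(4,5) cyl_same_length[OF assms(3) w] by blast
  qed
qed

lemma cyl_subset_cyl_Un_cyl_snoc: "cyl A w {} \<subseteq> cyl A w E \<union> (\<Union>c\<in>E. cyl A (w @ [c]) {})"
proof
  fix y assume y: "y \<in> cyl A w {}"
  show "y \<in> cyl A w E \<union> (\<Union>c\<in>E. cyl A (w @ [c]) {})"
  proof (cases "y (length w) \<in> Some ` E")
    case True
    then obtain c where "c \<in> E" "y (length w) = Some c" by blast
    with y have "y \<in> cyl A (w @ [c]) {}" by (auto simp: cyl_def nth_append less_Suc_eq)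
    with \<open>c \<in> E\<close> show ?thesis by blast
  next
    case False
    with y show ?thesis by (simp add: cyl_def)
  qed
qed

lemma dependent_choice_word:
  assumes "P []" "\<And>w. set w \<subseteq> A \<Longrightarrow> P w \<Longrightarrow> \<exists>c\<in>A. P (w @ [c])"
  obtains f where "range f \<subseteq> A" "\<forall>n. P (map f [0..<n])"
proof -
  define next_letter where "next_letter w = (SOME c. c \<in> A \<and> P (w @ [c]))" for w
  define g where "g n = ((\<lambda>w. w @ [next_letter w]) ^^ n) []" for n
  define f where "f n = next_letter (g n)" for n
  have g_Suc: "g (Suc n) = g n @ [f n]" for n by (simp add: g_def f_def)
  have g_map: "g n = map f [0..<n]" for n
    by (induction n) (simp_all add: g_Suc, simp add: g_def)
  have g: "set (g n) \<subseteq> A \<and> P (g n)" for n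
  proof (induction n)
    case 0
    show ?case using assms(1) by (simp add: g_def)
  next
    case (Suc n)
    then have "\<exists>c. c \<in> A \<and> P (g n @ [c])" using assms(2) by blast
    then have "f n \<in> A \<and> P (g n @ [f n])"
      unfolding f_def next_letter_def by (rule someI_ex)
    with Suc show ?case by (simp add: g_Suc)
  qed
  show ?thesis
  proof
    show "range f \<subseteq> A" using g[of "Suc _"] by (auto simp: g_Suc)
    show "\<forall>n. P (map f [0..<n])" using g by (simp add: g_map)
  qed
qed

definition finitely_covered :: "'a set set \<Rightarrow> 'a set \<Rightarrow> 'a set \<Rightarrow> bool" where
  "finitely_covered \<U> \<Lambda> S \<longleftrightarrow> (\<exists>\<V>\<subseteq>\<U>. finite \<V> \<and> \<Lambda> \<inter> S \<subseteq> \<Union>\<V>)"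

lemma finitely_covered_subset:
  "finitely_covered \<U> \<Lambda> T \<Longrightarrow> S \<subseteq> T \<Longrightarrow> finitely_covered \<U> \<Lambda> S"
  unfolding finitely_covered_def by blast

lemma finitely_covered_Un:
  assumes "finitely_covered \<U> \<Lambda> S" "finitely_covered \<U> \<Lambda> T"
  shows "finitely_covered \<U> \<Lambda> (S \<union> T)"
proof -
  obtain \<V> \<W> where "\<V> \<subseteq> \<U>" "finite \<V>" "\<Lambda> \<inter> S \<subseteq> \<Union>\<V>" "\<W> \<subseteq> \<U>" "finite \<W>" "\<Lambda> \<inter> T \<subseteq> \<Union>\<W>"
    using assms unfolding finitely_covered_def by blast
  then show ?thesis unfolding finitely_covered_def by (intro exI[of _ "\<V> \<union> \<W>"]) auto
qed

lemma finitely_covered_Union: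
  assumes "finite \<S>" "\<And>S. S \<in> \<S> \<Longrightarrow> finitely_covered \<U> \<Lambda> S"
  shows "finitely_covered \<U> \<Lambda> (\<Union>\<S>)"
  using assms
proof (induction rule: finite_induct)
  case empty
  show ?case unfolding finitely_covered_def by (intro exI[of _ "{}"]) auto
qed (simp add: finitely_covered_Un)

context
  fixes A :: "'a set" and \<Lambda> :: "'a seq set" and \<U> :: "'a seq set set"
  assumes \<Lambda>_closed: "closedin (OTW_top A) \<Lambda>" and \<U>_gcyls: "\<U> \<subseteq> gcyls A" and \<U>_cover: "\<Lambda> \<subseteq> \<Union>\<U>"
begin

lemma finitely_covered_cyl_near:
  assumes "x \<in> OTW A"
  obtains v F where "set v \<subseteq> A" "finite F" "F \<subseteq> A" "x \<in> cyl A v F"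
    "finitely_covered \<U> \<Lambda> (cyl A v F)"
proof (cases "x \<in> \<Lambda>")
  case True
  then obtain G where "G \<in> \<U>" "x \<in> G" using \<U>_cover by blast
  moreover from this \<U>_gcyls obtain v F where "G = cyl A v F" "set v \<subseteq> A" "finite F" "F \<subseteq> A"
    by (blast elim: gcyls_obtain_cyl)
  moreover from \<open>G \<in> \<U>\<close> have "finitely_covered \<U> \<Lambda> G"
    unfolding finitely_covered_def by (intro exI[of _ "{G}"]) auto
  ultimately show ?thesis using that by blast
next
  case False
  with \<Lambda>_closed assms have "cyl_eventually A x (\<lambda>y. y \<notin> \<Lambda>)"
    by (rule closedin_OTW_top_cyl_eventually)
  then obtain v F where "set v \<subseteq> A" "finite F" "F \<subseteq> A" "x \<in> cyl A v F" "\<forall>y\<in>cyl A v F. y \<notin> \<Lambda>"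
    unfolding cyl_eventually_def gcyls_eq by blast
  moreover from this(5) have "finitely_covered \<U> \<Lambda> (cyl A v F)"
    unfolding finitely_covered_def by (intro exI[of _ "{}"]) blast
  ultimately show ?thesis using that by blast
qed

text \<open>For infinite \<open>A\<close> the neighbourhood of the finite sequence \<open>w\<close> supplies \<open>E\<close>; for finite \<open>A\<close>
  the cylinder excluding all of \<open>A\<close> is empty.\<close>

lemma finitely_covered_cyl_excluding:
  assumes w: "set w \<subseteq> A"
  obtains E where "finite E" "E \<subseteq> A" "finitely_covered \<U> \<Lambda> (cyl A w E)"
proof (cases "finite A")
  case True
  then show ?thesis
    using that[of A] by (auto simp: cyl_finite_alphabet finitely_covered_def)
next
  case False
  then have "fin_seq w \<in> OTW A" by (rule subsetD[OF cyl_subset_OTW fin_seq_in_cyl[OF w]])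
  then obtain v F where vF: "finite F" "F \<subseteq> A" "fin_seq w \<in> cyl A v F"
    "finitely_covered \<U> \<Lambda> (cyl A v F)"
    by (rule finitely_covered_cyl_near)
  obtain E where E: "finite E" "E \<subseteq> A" "cyl A w E \<subseteq> cyl A v F"
    using cyl_through_fin_seq[OF w False vF(3,1,2)] .
  from vF(4) E(3) have "finitely_covered \<U> \<Lambda> (cyl A w E)" by (rule finitely_covered_subset)
  with E(1,2) that show ?thesis by blast
qed

lemma not_finitely_covered_snoc:
  assumes w: "set w \<subseteq> A" "\<not> finitely_covered \<U> \<Lambda> (cyl A w {})"
  shows "\<exists>c\<in>A. \<not> finitely_covered \<U> \<Lambda> (cyl A (w @ [c]) {})"
proof (rule ccontr)
  assume "\<not> ?thesis"
  then have snoc_covered: "finitely_covered \<U> \<Lambda> (cyl A (w @ [c]) {})" if "c \<in> A" for c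
    using that by blast
  obtain E where E: "finite E" "E \<subseteq> A" "finitely_covered \<U> \<Lambda> (cyl A w E)"
    using finitely_covered_cyl_excluding[OF w(1)] .
  have "finitely_covered \<U> \<Lambda> (\<Union>(insert (cyl A w E) ((\<lambda>c. cyl A (w @ [c]) {}) ` E)))"
  proof (rule finitely_covered_Union)
    show "finite (insert (cyl A w E) ((\<lambda>c. cyl A (w @ [c]) {}) ` E))" using E(1) by simp
  next
    fix S assume "S \<in> insert (cyl A w E) ((\<lambda>c. cyl A (w @ [c]) {}) ` E)"
    then consider "S = cyl A w E" | c where "c \<in> E" "S = cyl A (w @ [c]) {}" by blast
    then show "finitely_covered \<U> \<Lambda> S"
    proof cases
      case 1
      with E(3) show ?thesis by simp
    next
      case 2
      with E(2) snoc_covered show ?thesis by blast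
    qed
  qed
  then have "finitely_covered \<U> \<Lambda> (cyl A w {})"
    by (rule finitely_covered_subset) (use cyl_subset_cyl_Un_cyl_snoc[of A w E] in simp)
  with w(2) show False by blast
qed

text \<open>Koenig's argument: an infinite chain of cylinders that are not finitely covered converges to
  a point of the full shift, and the cylinder around that point given by the cover contains
  one of them.\<close>

lemma closedin_OTW_top_finite_subcover:
  obtains \<V> where "\<V> \<subseteq> \<U>" "finite \<V>" "\<Lambda> \<subseteq> \<Union>\<V>"
proof (rule ccontr)
  assume no_subcover: "\<not> thesis"
  have "\<not> finitely_covered \<U> \<Lambda> (cyl A [] {})"
  proof
    assume "finitely_covered \<U> \<Lambda> (cyl A [] {})"
    moreover have "\<Lambda> \<inter> OTW A = \<Lambda>"
      using closedin_subset[OF \<Lambda>_closed] by (auto simp: topspace_OTW_top)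
    ultimately obtain \<V> where "\<V> \<subseteq> \<U>" "finite \<V>" "\<Lambda> \<subseteq> \<Union>\<V>"
      unfolding finitely_covered_def cyl_Nil by auto
    with that no_subcover show False by blast
  qed
  then have "\<exists>f. range f \<subseteq> A \<and> (\<forall>n. \<not> finitely_covered \<U> \<Lambda> (cyl A (map f [0..<n]) {}))"
    by (rule dependent_choice_word[of "\<lambda>w. \<not> finitely_covered \<U> \<Lambda> (cyl A w {})"])
      (auto dest: not_finitely_covered_snoc)
  then obtain f where f: "range f \<subseteq> A" "\<forall>n. \<not> finitely_covered \<U> \<Lambda> (cyl A (map f [0..<n]) {})"
    by blast
  define x where "x = Some \<circ> f"
  have "x \<in> Sinf A" using f(1) by (auto simp: x_def Sinf_def)
  then have "x \<in> OTW A" by (simp add: OTW_def)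
  then have x: "x \<in> cyl A (map f [0..<n]) {}" for n by (simp add: x_def cyl_def)
  obtain v F where vF: "x \<in> cyl A v F" "finitely_covered \<U> \<Lambda> (cyl A v F)"
    using finitely_covered_cyl_near[OF \<open>x \<in> OTW A\<close>] by blast
  have "cyl A (map f [0..<Suc (length v)]) {} \<subseteq> cyl A v F"
    by (rule cyl_subset_cyl[OF vF(1) x]) simp
  with vF(2) have "finitely_covered \<U> \<Lambda> (cyl A (map f [0..<Suc (length v)]) {})"
    by (rule finitely_covered_subset)
  with f(2) show False by blast
qed

end

lemma clopen_eq_finite_Union_gcyls:
  assumes \<Lambda>: "closedin (OTW_top A) \<Lambda>"
    and P: "openin (subtopology (OTW_top A) \<Lambda>) P" "openin (subtopology (OTW_top A) \<Lambda>) (\<Lambda> - P)"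
  obtains S where "finite S" "S \<subseteq> gcyls A" "P = \<Union>S \<inter> \<Lambda>"
proof -
  have \<Lambda>_OTW: "\<Lambda> \<subseteq> OTW A" using closedin_subset[OF \<Lambda>] by (simp add: topspace_OTW_top)
  have "P \<subseteq> \<Lambda>" using openin_subset[OF P(1)] by simp
  define \<U> where "\<U> = {G \<in> gcyls A. G \<inter> \<Lambda> \<subseteq> P \<or> G \<inter> \<Lambda> \<subseteq> \<Lambda> - P}"
  have in_\<U>: "\<exists>G\<in>\<U>. x \<in> G" if "x \<in> Q" "Q = P \<or> Q = \<Lambda> - P" for x Q
  proof -
    from that P have "cyl_eventually A x (\<lambda>y. y \<in> \<Lambda> \<longrightarrow> y \<in> Q)"
      unfolding openin_subtopology_OTW_iff[OF \<Lambda>_OTW] by blast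
    then obtain G where "G \<in> gcyls A" "x \<in> G" "\<forall>y\<in>G. y \<in> \<Lambda> \<longrightarrow> y \<in> Q"
      unfolding cyl_eventually_def by blast
    moreover have "G \<inter> \<Lambda> \<subseteq> P \<or> G \<inter> \<Lambda> \<subseteq> \<Lambda> - P" using that(2) calculation(3) by blast
    ultimately show ?thesis unfolding \<U>_def by blast
  qed
  have "\<U> \<subseteq> gcyls A" by (simp add: \<U>_def)
  moreover have "\<Lambda> \<subseteq> \<Union>\<U>"
  proof
    fix x assume "x \<in> \<Lambda>"
    then consider "x \<in> P" | "x \<in> \<Lambda> - P" by blast
    then show "x \<in> \<Union>\<U>"
      by cases (use in_\<U>[of x P] in_\<U>[of x "\<Lambda> - P"] in auto)
  qed
  ultimately obtain \<V> where \<V>: "\<V> \<subseteq> \<U>" "finite \<V>" "\<Lambda> \<subseteq> \<Union>\<V>"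
    by (rule closedin_OTW_top_finite_subcover[OF \<Lambda>])
  show ?thesis
  proof
    let ?S = "{G \<in> \<V>. G \<inter> \<Lambda> \<subseteq> P}"
    show "finite ?S" using \<V>(2) by simp
    show "?S \<subseteq> gcyls A" using \<V>(1) by (auto simp: \<U>_def)
    show "P = \<Union>?S \<inter> \<Lambda>"
    proof
      show "P \<subseteq> \<Union>?S \<inter> \<Lambda>"
      proof
        fix x assume "x \<in> P"
        with \<open>P \<subseteq> \<Lambda>\<close> \<V>(3) obtain G where "G \<in> \<V>" "x \<in> G" "x \<in> \<Lambda>" by blast
        moreover from this \<V>(1) \<open>x \<in> P\<close> have "G \<inter> \<Lambda> \<subseteq> P" unfolding \<U>_def by blast
        ultimately show "x \<in> \<Union>?S \<inter> \<Lambda>" by blast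
      qed
    qed blast
  qed
qed

section \<open>Finitely defined sets\<close>

definition prefix_determined :: "'a seq set \<Rightarrow> 'a seq set \<Rightarrow> bool" where
  "prefix_determined \<Lambda> D \<longleftrightarrow>
     (\<forall>x\<in>D. \<exists>n. \<forall>y\<in>\<Lambda>. map y [0..<Suc n] = map x [0..<Suc n] \<longrightarrow> y \<in> D)"

lemma prefix_in_allblocks: "x \<in> OTW A \<Longrightarrow> map x [0..<Suc n] \<in> allblocks (OTW A)"
  unfolding allblocks_def blocks_def
  by (rule UN_I[of "Suc n"]) (auto intro!: bexI[of _ x] exI[of _ 0] simp del: upt_Suc)

lemma prefix_determined_obtain_blocks:
  assumes A: "countable A" and D: "D \<subseteq> \<Lambda>" "\<Lambda> \<subseteq> OTW A" "prefix_determined \<Lambda> D"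
  obtains I :: "nat set" and b :: "nat \<Rightarrow> 'a option list" and l :: "nat \<Rightarrow> nat"
  where "\<forall>i\<in>I. b i \<in> allblocks (OTW A)" "D = {x\<in>\<Lambda>. \<exists>i\<in>I. map x [0..<Suc (l i)] = b i}"
proof -
  define P where "P = {map x [0..<Suc n] | x n.
    x \<in> D \<and> (\<forall>y\<in>\<Lambda>. map y [0..<Suc n] = map x [0..<Suc n] \<longrightarrow> y \<in> D)}"
  have "P \<subseteq> lists (insert None (Some ` A))"
    using D(1,2) OTW_letter by (fastforce simp: P_def)
  moreover have "countable (lists (insert None (Some ` A)))" using A by simp
  ultimately have "countable P" by (rule countable_subset)
  have P_good: "w \<in> allblocks (OTW A) \<and> (\<forall>y\<in>\<Lambda>. map y [0..<Suc (length w - 1)] = w \<longrightarrow> y \<in> D)"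
    if "w \<in> P" for w
    using that D(1,2) prefix_in_allblocks unfolding P_def by (fastforce simp del: upt_Suc)
  have P_cover: "\<exists>w\<in>P. map x [0..<Suc (length w - 1)] = w" if "x \<in> D" for x
  proof -
    from that D(3) obtain n where "\<forall>y\<in>\<Lambda>. map y [0..<Suc n] = map x [0..<Suc n] \<longrightarrow> y \<in> D"
      unfolding prefix_determined_def by blast
    with that have "map x [0..<Suc n] \<in> P" unfolding P_def by blast
    then show ?thesis by (intro bexI) (simp_all del: upt_Suc)
  qed
  define b where "b = from_nat_into P"
  define l where "l i = length (b i) - 1" for i
  define I where "I = to_nat_on P ` P"
  have b_I: "b i \<in> P" if "i \<in> I" for i
    using that from_nat_into_to_nat_on[OF \<open>countable P\<close>] by (auto simp: I_def b_def)
  show ?thesis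
  proof
    show "\<forall>i\<in>I. b i \<in> allblocks (OTW A)" using b_I P_good by blast
    show "D = {x\<in>\<Lambda>. \<exists>i\<in>I. map x [0..<Suc (l i)] = b i}"
    proof
      show "D \<subseteq> {x\<in>\<Lambda>. \<exists>i\<in>I. map x [0..<Suc (l i)] = b i}"
      proof
        fix x assume "x \<in> D"
        with P_cover obtain w where w: "w \<in> P" "map x [0..<Suc (length w - 1)] = w" by blast
        then have "to_nat_on P w \<in> I" "b (to_nat_on P w) = w"
          using from_nat_into_to_nat_on[OF \<open>countable P\<close>] by (auto simp: I_def b_def)
        with w(2) \<open>x \<in> D\<close> D(1) show "x \<in> {x\<in>\<Lambda>. \<exists>i\<in>I. map x [0..<Suc (l i)] = b i}"
          unfolding l_def
          by (intro CollectI conjI bexI[of _ "to_nat_on P w"]) (auto simp del: upt_Suc)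
      qed
      show "{x\<in>\<Lambda>. \<exists>i\<in>I. map x [0..<Suc (l i)] = b i} \<subseteq> D"
        using b_I P_good unfolding l_def by blast
    qed
  qed
qed

lemma finitely_definedI:
  assumes "countable A" "C \<subseteq> \<Lambda>" "\<Lambda> \<subseteq> OTW A"
    and "prefix_determined \<Lambda> C" "prefix_determined \<Lambda> (\<Lambda> - C)"
  shows "finitely_defined A \<Lambda> C"
proof -
  obtain I :: "nat set" and b l where "\<forall>i\<in>I. b i \<in> allblocks (OTW A)"
    "C = {x\<in>\<Lambda>. \<exists>i\<in>I. map x [0..<Suc (l i)] = b i}"
    using prefix_determined_obtain_blocks[OF assms(1-4)] .
  moreover obtain J :: "nat set" and d n where "\<forall>j\<in>J. d j \<in> allblocks (OTW A)"
    "\<Lambda> - C = {x\<in>\<Lambda>. \<exists>j\<in>J. map x [0..<Suc (n j)] = d j}"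
    using prefix_determined_obtain_blocks[OF assms(1) Diff_subset assms(3,5)] .
  ultimately show ?thesis
    unfolding finitely_defined_def using assms(2) by blast
qed

lemma openin_prefix_determined:
  assumes "\<Lambda> \<subseteq> OTW A" "openin (subtopology (OTW_top A) \<Lambda>) P"
  shows "prefix_determined \<Lambda> P"
  unfolding prefix_determined_def
proof
  fix x assume "x \<in> P"
  with assms obtain G where "G \<in> gcyls A" "x \<in> G" "\<forall>y\<in>G. y \<in> \<Lambda> \<longrightarrow> y \<in> P"
    unfolding openin_subtopology_OTW_iff[OF assms(1)] cyl_eventually_def by blast
  then obtain v F where vF: "x \<in> cyl A v F" "\<forall>y\<in>cyl A v F. y \<in> \<Lambda> \<longrightarrow> y \<in> P"
    by (auto elim: gcyls_obtain_cyl)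
  show "\<exists>n. \<forall>y\<in>\<Lambda>. map y [0..<Suc n] = map x [0..<Suc n] \<longrightarrow> y \<in> P"
  proof (intro exI ballI impI)
    fix y assume y: "y \<in> \<Lambda>" "map y [0..<Suc (length v)] = map x [0..<Suc (length v)]"
    then have "\<forall>i\<le>length v. y i = x i"
      by (simp del: upt_Suc add: map_eq_conv)
    then have "y \<in> cyl A v F"
      using cyl_agree_iff[of x A y v F] vF(1) y(1) assms(1) cyl_subset_OTW by blast
    with vF(2) y(1) show "y \<in> P" by blast
  qed
qed

section \<open>Sliding block codes\<close>

lemma letters_of_mem: "z \<in> \<Gamma> \<Longrightarrow> z n = Some c \<Longrightarrow> c \<in> letters \<Gamma>"
  unfolding letters_def blocks_def by (auto intro!: bexI[of _ z] exI[of _ n])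

lemma letters_subset:
  assumes "\<Gamma> \<subseteq> OTW B"
  shows "letters \<Gamma> \<subseteq> B"
proof
  fix c assume "c \<in> letters \<Gamma>"
  then obtain z k where "z \<in> \<Gamma>" "z k = Some c"
    unfolding letters_def blocks_def by (auto simp: Cons_eq_map_conv)
  with assms OTW_letter[of z B k] show "c \<in> B" by auto
qed

lemma continuous_map_OTW_iff:
  assumes "\<Lambda> \<subseteq> OTW A" "\<Gamma> \<subseteq> OTW B" "\<forall>x\<in>\<Lambda>. \<Phi> x \<in> \<Gamma>"
  shows "continuous_map (subtopology (OTW_top A) \<Lambda>) (subtopology (OTW_top B) \<Gamma>) \<Phi> \<longleftrightarrow>
           (\<forall>U\<in>gcyls B. openin (subtopology (OTW_top A) \<Lambda>) (\<Phi> -` U \<inter> \<Lambda>))"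
proof -
  have top: "topspace (subtopology (OTW_top A) \<Lambda>) = \<Lambda>"
    using assms(1) by (auto simp: topspace_OTW_top)
  have eq: "subtopology (OTW_top B) \<Gamma> = subtopology (topology_generated_by (gcyls B)) (OTW B \<inter> \<Gamma>)"
    by (simp add: OTW_top_def subtopology_subtopology)
  have "\<Phi> ` \<Lambda> \<subseteq> \<Union>(gcyls B)" "\<Phi> \<in> \<Lambda> \<rightarrow> OTW B \<inter> \<Gamma>"
    using assms(2,3) by (auto simp: Union_gcyls[of B, symmetric])
  then show ?thesis
    unfolding eq continuous_map_in_subtopology continuous_on_generated_topo_iff top
    by (simp add: Ball_def)
qed

lemma funpow_shift_commute:
  assumes "shift ` \<Lambda> \<subseteq> \<Lambda>" "\<forall>x\<in>\<Lambda>. \<Phi> (shift x) = shift (\<Phi> x)" "x \<in> \<Lambda>"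
  shows "\<Phi> ((shift ^^ n) x) = (shift ^^ n) (\<Phi> x)"
proof (induction n)
  case (Suc n)
  have "(shift ^^ n) x \<in> \<Lambda>" using funpow_shift_closed[OF assms(1,3)] .
  with assms(2) Suc show ?case by simp
qed simp

lemma coordinate_funpow_shift:
  assumes "shift ` \<Lambda> \<subseteq> \<Lambda>" "\<forall>x\<in>\<Lambda>. \<Phi> (shift x) = shift (\<Phi> x)" "x \<in> \<Lambda>"
  shows "\<Phi> x n = \<Phi> ((shift ^^ n) x) 0"
  using funpow_shift_commute[OF assms, of n] by (simp add: funpow_shift)

lemma sliding_block_code_eq_iff:
  assumes sbc: "sliding_block_code A \<Lambda> K C \<Phi>" and "shift ` \<Lambda> \<subseteq> \<Lambda>" "x \<in> \<Lambda>"
  shows "\<Phi> x n = a \<longleftrightarrow> a \<in> insert None (Some ` K) \<and> (shift ^^ n) x \<in> C a"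
proof -
  let ?L = "insert None (Some ` K)"
  have disjoint: "\<forall>a\<in>?L. \<forall>b\<in>?L. a \<noteq> b \<longrightarrow> C a \<inter> C b = {}"
    and cover: "(\<Union>a\<in>?L. C a) = \<Lambda>"
    and code: "\<forall>x\<in>\<Lambda>. \<forall>n. \<Phi> x n = (THE a. a \<in> ?L \<and> (shift ^^ n) x \<in> C a)"
    using sbc unfolding sliding_block_code_def by simp_all
  have "(shift ^^ n) x \<in> \<Lambda>" using funpow_shift_closed assms(2,3) .
  with cover obtain b where b: "b \<in> ?L" "(shift ^^ n) x \<in> C b" by blast
  have unique: "c \<in> ?L \<and> (shift ^^ n) x \<in> C c \<longleftrightarrow> c = b" for c
  proof
    assume c: "c \<in> ?L \<and> (shift ^^ n) x \<in> C c"
    show "c = b"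
    proof (rule ccontr)
      assume "c \<noteq> b"
      then have "C c \<inter> C b = {}" by (rule disjoint[rule_format, OF conjunct1[OF c] b(1)])
      with c b(2) show False by blast
    qed
  qed (use b in simp)
  then have "(THE c. c \<in> ?L \<and> (shift ^^ n) x \<in> C c) = b" by simp
  with code assms(3) have "\<Phi> x n = b" by simp
  with unique[of a] show ?thesis by auto
qed

lemma sliding_block_code_shift:
  assumes "sliding_block_code A \<Lambda> K C \<Phi>" "shift ` \<Lambda> \<subseteq> \<Lambda>" "x \<in> \<Lambda>"
  shows "\<Phi> (shift x) = shift (\<Phi> x)"
proof
  fix n
  have "(shift ^^ n) (shift x) = (shift ^^ Suc n) x" by (simp add: funpow_swap1)
  moreover have "shift x \<in> \<Lambda>" using assms(2,3) by blast
  ultimately show "\<Phi> (shift x) n = shift (\<Phi> x) n"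
    using assms(1,3) unfolding sliding_block_code_def shift_def by simp
qed

text \<open>If \<open>x n = None\<close>, then \<open>\<sigma>\<^sup>n x = \<O>\<close>, which \<open>\<Phi>\<close> maps to \<open>\<O>\<close>.\<close>

lemma output_letter_imp_input_letter:
  assumes "\<Lambda> \<subseteq> OTW A" "shift ` \<Lambda> \<subseteq> \<Lambda>" "\<forall>x\<in>\<Lambda>. \<Phi> (shift x) = shift (\<Phi> x)"
    "\<Phi> emp = emp" "x \<in> \<Lambda>" "\<Phi> x n \<noteq> None"
  shows "x n \<noteq> None"
proof
  assume "x n = None"
  then have "(shift ^^ n) x = emp" using assms(1,5) by (blast intro: funpow_shift_emp)
  with assms(4) coordinate_funpow_shift[OF assms(2,3,5), of n] have "\<Phi> x n = None"
    by (simp add: emp_def)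
  with assms(6) show False by blast
qed

lemma sliding_block_code_cyl_eventually_letter:
  assumes sbc: "sliding_block_code A \<Lambda> K C \<Phi>" and \<Lambda>: "\<Lambda> \<subseteq> OTW A" "shift ` \<Lambda> \<subseteq> \<Lambda>"
    and cyls: "\<forall>a\<in>K. \<exists>S. finite S \<and> S \<subseteq> gcyls A \<and> C (Some a) = \<Union>S \<inter> \<Lambda>" and a: "a \<in> K"
    and x: "x \<in> \<Lambda>" "\<forall>j<n. x j \<noteq> None"
  shows "cyl_eventually A x (\<lambda>y. y \<in> \<Lambda> \<longrightarrow> (\<Phi> y n = Some a \<longleftrightarrow> \<Phi> x n = Some a))"
proof -
  from bspec[OF cyls a] obtain S where S: "finite S" "S \<subseteq> gcyls A" "C (Some a) = \<Union>S \<inter> \<Lambda>"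
    by metis
  have letter_iff: "\<Phi> y n = Some a \<longleftrightarrow> (shift ^^ n) y \<in> \<Union>S" if "y \<in> \<Lambda>" for y
    using sliding_block_code_eq_iff[OF sbc \<Lambda>(2) that, of n "Some a"]
      funpow_shift_closed[OF \<Lambda>(2) that, of n] S(3) a by auto
  have "x \<in> OTW A" using \<Lambda>(1) x(1) by blast
  then have "cyl_eventually A x (\<lambda>y. (shift ^^ n) y \<in> \<Union>S \<longleftrightarrow> (shift ^^ n) x \<in> \<Union>S)"
    by (rule cyl_eventually_funpow_shift_Union_iff[OF _ x(2) S(1,2)])
  then show ?thesis by (rule cyl_eventually_mono) (simp add: letter_iff x(1))
qed

lemma sliding_block_code_cyl_eventually_cyl:
  assumes sbc: "sliding_block_code A \<Lambda> K C \<Phi>" and \<Lambda>: "\<Lambda> \<subseteq> OTW A" "shift ` \<Lambda> \<subseteq> \<Lambda>"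
    and out: "\<forall>y\<in>\<Lambda>. \<Phi> y \<in> OTW B" and emp: "\<Phi> emp = emp"
    and cyls: "\<forall>a\<in>K. \<exists>S. finite S \<and> S \<subseteq> gcyls A \<and> C (Some a) = \<Union>S \<inter> \<Lambda>"
    and x: "x \<in> \<Lambda>" "\<Phi> x \<in> cyl B v F" and F: "finite F"
  shows "cyl_eventually A x (\<lambda>y. y \<in> \<Lambda> \<longrightarrow> \<Phi> y \<in> cyl B v F)"
proof -
  let ?n = "length v"
  have letter_K: "c \<in> K" if "y \<in> \<Lambda>" "\<Phi> y i = Some c" for y i c
    using sliding_block_code_eq_iff[OF sbc \<Lambda>(2) that(1), of i "Some c"] that(2) by auto
  have prefix: "\<Phi> x i = Some (v ! i)" if "i < ?n" for i
    using x that by (simp add: cyl_def)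
  have comm: "\<forall>x\<in>\<Lambda>. \<Phi> (shift x) = shift (\<Phi> x)"
    using sliding_block_code_shift[OF sbc \<Lambda>(2)] by blast
  have "x j \<noteq> None" if "j < ?n" for j
    using output_letter_imp_input_letter[OF \<Lambda> comm emp x(1)] prefix[OF that] by simp
  then have near: "cyl_eventually A x (\<lambda>y. y \<in> \<Lambda> \<longrightarrow> (\<Phi> y i = Some a \<longleftrightarrow> \<Phi> x i = Some a))"
    if "i \<le> ?n" "a \<in> K" for i a
    using that by (intro sliding_block_code_cyl_eventually_letter[OF sbc \<Lambda> cyls _ x(1)]) auto
  have "x \<in> OTW A" using x \<Lambda>(1) by blast
  have "cyl_eventually A x (\<lambda>y.
      \<forall>i\<in>{..<?n}. y \<in> \<Lambda> \<longrightarrow> (\<Phi> y i = Some (v ! i) \<longleftrightarrow> \<Phi> x i = Some (v ! i)))"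
  proof (rule cyl_eventually_ball[OF _ \<open>x \<in> OTW A\<close>])
    fix i assume "i \<in> {..<?n}"
    with x prefix letter_K[of x i "v ! i"] show "cyl_eventually A x
        (\<lambda>y. y \<in> \<Lambda> \<longrightarrow> (\<Phi> y i = Some (v ! i) \<longleftrightarrow> \<Phi> x i = Some (v ! i)))"
      by (intro near) auto
  qed simp
  moreover have "cyl_eventually A x (\<lambda>y.
      \<forall>c\<in>F \<inter> K. y \<in> \<Lambda> \<longrightarrow> (\<Phi> y ?n = Some c \<longleftrightarrow> \<Phi> x ?n = Some c))"
    by (rule cyl_eventually_ball[OF _ \<open>x \<in> OTW A\<close>]) (use F near in auto)
  ultimately have "cyl_eventually A x (\<lambda>y.
      (\<forall>i\<in>{..<?n}. y \<in> \<Lambda> \<longrightarrow> (\<Phi> y i = Some (v ! i) \<longleftrightarrow> \<Phi> x i = Some (v ! i))) \<and>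
      (\<forall>c\<in>F \<inter> K. y \<in> \<Lambda> \<longrightarrow> (\<Phi> y ?n = Some c \<longleftrightarrow> \<Phi> x ?n = Some c)))"
    by (rule cyl_eventually_conj)
  then show ?thesis
  proof (rule cyl_eventually_mono)
    fix y assume agree:
      "(\<forall>i\<in>{..<?n}. y \<in> \<Lambda> \<longrightarrow> (\<Phi> y i = Some (v ! i) \<longleftrightarrow> \<Phi> x i = Some (v ! i))) \<and>
       (\<forall>c\<in>F \<inter> K. y \<in> \<Lambda> \<longrightarrow> (\<Phi> y ?n = Some c \<longleftrightarrow> \<Phi> x ?n = Some c))"
    show "y \<in> \<Lambda> \<longrightarrow> \<Phi> y \<in> cyl B v F"
    proof
      assume y: "y \<in> \<Lambda>"
      have "\<Phi> x ?n \<notin> Some ` F" using x by (simp add: cyl_def)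
      then have "\<Phi> y ?n \<notin> Some ` F" using agree y letter_K[OF y, of ?n] by auto
      moreover have "\<Phi> y i = Some (v ! i)" if "i < ?n" for i
        using agree y prefix that by simp
      ultimately show "\<Phi> y \<in> cyl B v F" using out y by (simp add: cyl_def)
    qed
  qed
qed

lemma sliding_block_code_continuous:
  assumes sbc: "sliding_block_code A \<Lambda> K C \<Phi>"
    and \<Lambda>: "\<Lambda> \<subseteq> OTW A" "shift ` \<Lambda> \<subseteq> \<Lambda>" and \<Gamma>: "\<Gamma> \<subseteq> OTW B" "\<forall>x\<in>\<Lambda>. \<Phi> x \<in> \<Gamma>"
    and emp: "\<Phi> emp = emp"
    and cyls: "\<forall>a\<in>K. \<exists>S. finite S \<and> S \<subseteq> gcyls A \<and> C (Some a) = \<Union>S \<inter> \<Lambda>"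
  shows "continuous_map (subtopology (OTW_top A) \<Lambda>) (subtopology (OTW_top B) \<Gamma>) \<Phi>"
  unfolding continuous_map_OTW_iff[OF \<Lambda>(1) \<Gamma>]
proof
  fix U assume "U \<in> gcyls B"
  then obtain v F where U: "U = cyl B v F" "finite F" by (blast elim: gcyls_obtain_cyl)
  have out: "\<forall>y\<in>\<Lambda>. \<Phi> y \<in> OTW B" using \<Gamma> by blast
  show "openin (subtopology (OTW_top A) \<Lambda>) (\<Phi> -` U \<inter> \<Lambda>)"
    unfolding openin_subtopology_OTW_iff[OF \<Lambda>(1)] U(1)
  proof (intro conjI ballI)
    fix x assume "x \<in> \<Phi> -` cyl B v F \<inter> \<Lambda>"
    then have "cyl_eventually A x (\<lambda>y. y \<in> \<Lambda> \<longrightarrow> \<Phi> y \<in> cyl B v F)"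
      by (intro sliding_block_code_cyl_eventually_cyl[OF sbc \<Lambda> out emp cyls _ _ U(2)]) auto
    then show "cyl_eventually A x (\<lambda>y. y \<in> \<Lambda> \<longrightarrow> y \<in> \<Phi> -` cyl B v F \<inter> \<Lambda>)"
      by (rule cyl_eventually_mono) blast
  qed blast
qed

lemma openin_coordinate_preimage:
  assumes cont: "continuous_map (subtopology (OTW_top A) \<Lambda>) (subtopology (OTW_top B) \<Gamma>) \<Phi>"
    and \<Lambda>: "\<Lambda> \<subseteq> OTW A" and \<Gamma>: "\<Gamma> \<subseteq> OTW B" "\<forall>x\<in>\<Lambda>. \<Phi> x \<in> \<Gamma>" and a: "a \<in> B"
  shows "openin (subtopology (OTW_top A) \<Lambda>) {x\<in>\<Lambda>. \<Phi> x 0 = Some a}"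
    and "openin (subtopology (OTW_top A) \<Lambda>) (\<Lambda> - {x\<in>\<Lambda>. \<Phi> x 0 = Some a})"
proof -
  have preimage: "openin (subtopology (OTW_top A) \<Lambda>) (\<Phi> -` U \<inter> \<Lambda>)" if "U \<in> gcyls B" for U
    using cont that unfolding continuous_map_OTW_iff[OF \<Lambda> \<Gamma>] by blast
  have "{x\<in>\<Lambda>. \<Phi> x 0 = Some a} = \<Phi> -` cyl B [a] {} \<inter> \<Lambda>"
    using \<Gamma> by (auto simp: cyl_def)
  then show "openin (subtopology (OTW_top A) \<Lambda>) {x\<in>\<Lambda>. \<Phi> x 0 = Some a}"
    using preimage[OF cyl_in_gcyls[of "[a]" B "{}"]] a by simp
  have "\<Lambda> - {x\<in>\<Lambda>. \<Phi> x 0 = Some a} = \<Phi> -` cyl B [] {a} \<inter> \<Lambda>"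
    using \<Gamma> by (auto simp: cyl_def)
  then show "openin (subtopology (OTW_top A) \<Lambda>) (\<Lambda> - {x\<in>\<Lambda>. \<Phi> x 0 = Some a})"
    using preimage[OF cyl_in_gcyls[of "[]" B "{a}"]] a by simp
qed

lemma sliding_block_code_by_coordinate:
  assumes \<Lambda>: "shift ` \<Lambda> \<subseteq> \<Lambda>" and comm: "\<forall>x\<in>\<Lambda>. \<Phi> (shift x) = shift (\<Phi> x)"
    and out: "\<forall>x\<in>\<Lambda>. \<Phi> x \<in> OTW B" "\<forall>x\<in>\<Lambda>. \<Phi> x 0 \<in> insert None (Some ` K)"
    and fd: "\<forall>a\<in>insert None (Some ` K). finitely_defined A \<Lambda> {x\<in>\<Lambda>. \<Phi> x 0 = a}"
  shows "sliding_block_code A \<Lambda> K (\<lambda>a. {x\<in>\<Lambda>. \<Phi> x 0 = a}) \<Phi>"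
  unfolding sliding_block_code_def
proof (intro conjI ballI allI impI)
  show "shift ` {x\<in>\<Lambda>. \<Phi> x 0 = None} \<subseteq> {x\<in>\<Lambda>. \<Phi> x 0 = None}"
  proof clarify
    fix x assume x: "x \<in> \<Lambda>" "\<Phi> x 0 = None"
    have "\<Phi> x 1 = None" using OTW_None_mono[of "\<Phi> x" B 0 1] out(1) x by simp
    with x comm \<Lambda> show "shift x \<in> \<Lambda> \<and> \<Phi> (shift x) 0 = None" by (auto simp: shift_def)
  qed
  fix x n assume "x \<in> \<Lambda>"
  have "(shift ^^ n) x \<in> \<Lambda>" using funpow_shift_closed[OF \<Lambda> \<open>x \<in> \<Lambda>\<close>] .
  with out(2) have "(THE a. a \<in> insert None (Some ` K) \<and> (shift ^^ n) x \<in> {x\<in>\<Lambda>. \<Phi> x 0 = a})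
      = \<Phi> ((shift ^^ n) x) 0"
    by (intro the_equality) auto
  then show "\<Phi> x n = (THE a. a \<in> insert None (Some ` K) \<and> (shift ^^ n) x \<in> {x\<in>\<Lambda>. \<Phi> x 0 = a})"
    using coordinate_funpow_shift[OF \<Lambda> comm \<open>x \<in> \<Lambda>\<close>] by simp
qed (use fd out(2) in auto)

lemma continuous_shift_commuting_is_sliding_block_code:
  assumes A: "countable A" and \<Lambda>: "closedin (OTW_top A) \<Lambda>" "shift ` \<Lambda> \<subseteq> \<Lambda>"
    and \<Gamma>: "\<Gamma> \<subseteq> OTW B" "\<forall>x\<in>\<Lambda>. \<Phi> x \<in> \<Gamma>"
    and fd: "finitely_defined A \<Lambda> {x\<in>\<Lambda>. \<Phi> x = emp}"
    and cont: "continuous_map (subtopology (OTW_top A) \<Lambda>) (subtopology (OTW_top B) \<Gamma>) \<Phi>"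
    and comm: "\<forall>x\<in>\<Lambda>. \<Phi> (shift x) = shift (\<Phi> x)"
  shows "\<exists>C. C None = {x\<in>\<Lambda>. \<Phi> x = emp} \<and> sliding_block_code A \<Lambda> (letters \<Gamma>) C \<Phi> \<and>
           (\<forall>a\<in>letters \<Gamma>. \<exists>S. finite S \<and> S \<subseteq> gcyls A \<and> C (Some a) = \<Union>S \<inter> \<Lambda>)"
proof (intro exI conjI)
  let ?C = "\<lambda>a. {x\<in>\<Lambda>. \<Phi> x 0 = a}"
  have \<Lambda>_OTW: "\<Lambda> \<subseteq> OTW A" using closedin_subset[OF \<Lambda>(1)] by (simp add: topspace_OTW_top)
  have out: "\<forall>x\<in>\<Lambda>. \<Phi> x \<in> OTW B" using \<Gamma> by blast
  show C_None: "?C None = {x\<in>\<Lambda>. \<Phi> x = emp}" using out OTW_eq_emp_iff by blast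
  have clopen: "openin (subtopology (OTW_top A) \<Lambda>) (?C (Some a))"
    "openin (subtopology (OTW_top A) \<Lambda>) (\<Lambda> - ?C (Some a))" if "a \<in> letters \<Gamma>" for a
    using openin_coordinate_preimage[OF cont \<Lambda>_OTW \<Gamma>] letters_subset[OF \<Gamma>(1)] that by auto
  have defined: "finitely_defined A \<Lambda> (?C a)" if "a \<in> insert None (Some ` letters \<Gamma>)" for a
  proof (cases a)
    case None
    with fd C_None show ?thesis by simp
  next
    case (Some c)
    with that clopen[of c] show ?thesis
      by (auto intro!: finitely_definedI[OF A _ \<Lambda>_OTW] openin_prefix_determined[OF \<Lambda>_OTW])
  qed
  have "\<forall>x\<in>\<Lambda>. \<Phi> x 0 \<in> insert None (Some ` letters \<Gamma>)"
  proof
    fix x assume "x \<in> \<Lambda>"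
    then show "\<Phi> x 0 \<in> insert None (Some ` letters \<Gamma>)"
      using letters_of_mem[of "\<Phi> x" \<Gamma> 0] \<Gamma>(2) by (cases "\<Phi> x 0") auto
  qed
  moreover have "\<forall>a\<in>insert None (Some ` letters \<Gamma>). finitely_defined A \<Lambda> (?C a)"
    using defined by blast
  ultimately show "sliding_block_code A \<Lambda> (letters \<Gamma>) ?C \<Phi>"
    by (rule sliding_block_code_by_coordinate[OF \<Lambda>(2) comm out])
  show "\<forall>a\<in>letters \<Gamma>. \<exists>S. finite S \<and> S \<subseteq> gcyls A \<and> ?C (Some a) = \<Union>S \<inter> \<Lambda>"
  proof
    fix a assume "a \<in> letters \<Gamma>"
    from clopen_eq_finite_Union_gcyls[OF \<Lambda>(1) clopen[OF this]] obtain S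
      where "finite S" "S \<subseteq> gcyls A" "?C (Some a) = \<Union>S \<inter> \<Lambda>" .
    then show "\<exists>S. finite S \<and> S \<subseteq> gcyls A \<and> ?C (Some a) = \<Union>S \<inter> \<Lambda>" by (intro exI conjI)
  qed
qed

theorem mainTheorem1:
  fixes A :: "'a set" and B :: "'b set"
    and \<Lambda> :: "'a seq set" and \<Gamma> :: "'b seq set" and \<Phi> :: "'a seq \<Rightarrow> 'b seq"
  assumes "countable A" and "countable B"
    and "shift_space A \<Lambda>" and "shift_space B \<Gamma>"
    and "\<forall>x\<in>\<Lambda>. \<Phi> x \<in> \<Gamma>"
    and "\<Phi> emp = emp"
    and "finitely_defined A \<Lambda> {x\<in>\<Lambda>. \<Phi> x = emp}"
  shows "(continuous_map (subtopology (OTW_top A) \<Lambda>) (subtopology (OTW_top B) \<Gamma>) \<Phi>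
           \<and> (\<forall>x\<in>\<Lambda>. \<Phi> (shift x) = shift (\<Phi> x)))
         \<longleftrightarrow>
         (\<exists>C. C None = {x\<in>\<Lambda>. \<Phi> x = emp} \<and> sliding_block_code A \<Lambda> (letters \<Gamma>) C \<Phi> \<and>
              (\<forall>a\<in>letters \<Gamma>. \<exists>S. finite S \<and> S \<subseteq> gcyls A \<and> C (Some a) = \<Union>S \<inter> \<Lambda>))"
proof -
  from assms(3) have \<Lambda>: "\<Lambda> \<subseteq> OTW A" "closedin (OTW_top A) \<Lambda>" "shift ` \<Lambda> \<subseteq> \<Lambda>"
    unfolding shift_space_def by simp_all
  from assms(4) have \<Gamma>: "\<Gamma> \<subseteq> OTW B" unfolding shift_space_def by simp
  show ?thesis
  proof
    assume H: "continuous_map (subtopology (OTW_top A) \<Lambda>) (subtopology (OTW_top B) \<Gamma>) \<Phi>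
      \<and> (\<forall>x\<in>\<Lambda>. \<Phi> (shift x) = shift (\<Phi> x))"
    show "\<exists>C. C None = {x\<in>\<Lambda>. \<Phi> x = emp} \<and> sliding_block_code A \<Lambda> (letters \<Gamma>) C \<Phi> \<and>
        (\<forall>a\<in>letters \<Gamma>. \<exists>S. finite S \<and> S \<subseteq> gcyls A \<and> C (Some a) = \<Union>S \<inter> \<Lambda>)"
      using continuous_shift_commuting_is_sliding_block_code[OF assms(1) \<Lambda>(2,3) \<Gamma> assms(5,7)] H
      by simp
  next
    assume "\<exists>C. C None = {x\<in>\<Lambda>. \<Phi> x = emp} \<and> sliding_block_code A \<Lambda> (letters \<Gamma>) C \<Phi> \<and>
        (\<forall>a\<in>letters \<Gamma>. \<exists>S. finite S \<and> S \<subseteq> gcyls A \<and> C (Some a) = \<Union>S \<inter> \<Lambda>)"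
    then obtain C where C: "sliding_block_code A \<Lambda> (letters \<Gamma>) C \<Phi>"
      "\<forall>a\<in>letters \<Gamma>. \<exists>S. finite S \<and> S \<subseteq> gcyls A \<and> C (Some a) = \<Union>S \<inter> \<Lambda>"
      by metis
    show "continuous_map (subtopology (OTW_top A) \<Lambda>) (subtopology (OTW_top B) \<Gamma>) \<Phi>
      \<and> (\<forall>x\<in>\<Lambda>. \<Phi> (shift x) = shift (\<Phi> x))"
      using sliding_block_code_continuous[OF C(1) \<Lambda>(1,3) \<Gamma> assms(5,6) C(2)]
        sliding_block_code_shift[OF C(1) \<Lambda>(3)] by simp
  qed
qed

end
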